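(* Let $R$ be an amenable affine algebra over a field $K$ with no zero divisors. Then there exist finite-dimensional $K$-subspaces $\overline{V}_1\subseteq V_1\subseteq\overline{V}_2\subseteq V_2\subseteq\cdots\subseteq R$ such that: (a) for every $r\in R$, $\lim_{n\to\infty}\dim_K(V_nr+V_n)/\dim_K(V_n)=1$; (b) $\lim_{n\to\infty}\dim_K(\overline{V}_n)/\dim_K(V_n)=1$; (c) for every finite-dimensional $K$-subspace $Z\subseteq R$ there exists $k>0$ such that $\overline{V}_n+\overline{V}_nZ\subseteq V_n$ for all $n>k$.
   Context: An affine algebra is a finitely generated associative algebra over $K$, not necessarily unital. For subspaces $V,Z$, $VZ$ denotes the $K$-span of all products $vz$. $R$ is amenable if there exist finite-dimensional $K$-subspaces $W_1\subseteq W_2\subseteq\cdots$ with $\bigcup_nW_n=R$ such that for every $r\in R$, $\lim_{n\to\infty}\dim_K(W_nr+W_n)/\dim_K(W_n)=1$. *)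

theory Defs
  imports Complex_Main
begin

text \<open>A (not necessarily unital) associative algebra over a field: the type 'r carries an
 associative ring structure (class ring, no unit required) and scale makes it a K-vector
 space, with multiplication K-bilinear.\<close>
definition algebra_over :: "('k::field \<Rightarrow> 'r::ring \<Rightarrow> 'r) \<Rightarrow> bool" where
  "algebra_over scale \<longleftrightarrow> vector_space scale \<and>
     (\<forall>a x y. scale a (x * y) = scale a x * y \<and> scale a (x * y) = x * scale a y)"

definition fd_subspace :: "('k::field \<Rightarrow> 'r::ring \<Rightarrow> 'r) \<Rightarrow> 'r set \<Rightarrow> bool" where
  "fd_subspace scale W \<longleftrightarrow> (\<exists>B. finite B \<and> W = module.span scale B)"

definition affine_algebra :: "('k::field \<Rightarrow> 'r::ring \<Rightarrow> 'r) \<Rightarrow> bool" where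
  "affine_algebra scale \<longleftrightarrow> algebra_over scale \<and>
     (\<exists>G. finite G \<and> (\<forall>S. module.subspace scale S \<and> G \<subseteq> S \<and> (\<forall>x\<in>S. \<forall>y\<in>S. x * y \<in> S)
            \<longrightarrow> S = UNIV))"

definition set_prod :: "('k::field \<Rightarrow> 'r::ring \<Rightarrow> 'r) \<Rightarrow> 'r set \<Rightarrow> 'r set \<Rightarrow> 'r set" where
  "set_prod scale V Z = module.span scale {v * z | v z. v \<in> V \<and> z \<in> Z}"

definition set_sum :: "'r::ring set \<Rightarrow> 'r set \<Rightarrow> 'r set" where
  "set_sum A B = {a + b | a b. a \<in> A \<and> b \<in> B}"

definition kdim :: "('k::field \<Rightarrow> 'r::ring \<Rightarrow> 'r) \<Rightarrow> 'r set \<Rightarrow> real" where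
  "kdim scale W = real (vector_space.dim scale W)"

definition amenable :: "('k::field \<Rightarrow> 'r::ring \<Rightarrow> 'r) \<Rightarrow> bool" where
  "amenable scale \<longleftrightarrow> (\<exists>W :: nat \<Rightarrow> 'r set.
     (\<forall>n. fd_subspace scale (W n)) \<and> (\<forall>n. W n \<subseteq> W (Suc n)) \<and> (\<Union>n. W n) = UNIV \<and>
     (\<forall>r. (\<lambda>n. kdim scale (set_sum (set_prod scale (W n) {r}) (W n)) / kdim scale (W n))
             \<longlonglongrightarrow> 1))"

end

theory Submission
  imports Defs
begin

(* Let W_n be a Folner exhaustion of R. Since dim is submodular and
   W + W(Z1 + Z2) is contained in (W + WZ1) + (W + WZ2), the Folner condition for single
   elements gives dim (W_n + W_n Z) <= (1 + e) dim W_n for large n, for every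
   finite-dimensional Z. Choose indices m_n inductively such that, with Y_n = W_n + W_n W_n,
   dim (W_{m_n} + W_{m_n} Y_n) <= (1 + 1/(n+1)) dim W_{m_n} and
   W_{m_n} + W_{m_n} W_n is contained in W_{m_(n+1)}, and put Vb_n = W_{m_n} and
   V_n = Vb_n + Vb_n W_n. By associativity V_n r + V_n lies in Vb_n + Vb_n Y_n as soon as
   r is in W_n, so dim (V_n r + V_n) and dim V_n are both squeezed between dim Vb_n and
   (1 + 1/(n+1)) dim Vb_n. Finally every finite-dimensional Z eventually lies in W_n, and
   then Vb_n + Vb_n Z is contained in V_n. *)

definition enlarge :: "('k::field \<Rightarrow> 'r::ring \<Rightarrow> 'r) \<Rightarrow> 'r set \<Rightarrow> 'r set \<Rightarrow> 'r set" where
  "enlarge scale V Z = set_sum V (set_prod scale V Z)"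

definition fd_exhaustion :: "('k::field \<Rightarrow> 'r::ring \<Rightarrow> 'r) \<Rightarrow> (nat \<Rightarrow> 'r set) \<Rightarrow> bool" where
  "fd_exhaustion scale W \<longleftrightarrow>
     (\<forall>n. fd_subspace scale (W n)) \<and> (\<forall>n. W n \<subseteq> W (Suc n)) \<and> (\<Union>n. W n) = UNIV"

definition folner_seq :: "('k::field \<Rightarrow> 'r::ring \<Rightarrow> 'r) \<Rightarrow> (nat \<Rightarrow> 'r set) \<Rightarrow> bool" where
  "folner_seq scale W \<longleftrightarrow>
     (\<forall>r. (\<lambda>n. kdim scale (set_sum (set_prod scale (W n) {r}) (W n)) / kdim scale (W n)) \<longlonglongrightarrow> 1)"

lemma amenable_iff: "amenable scale \<longleftrightarrow> (\<exists>W. fd_exhaustion scale W \<and> folner_seq scale W)"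
  unfolding amenable_def fd_exhaustion_def folner_seq_def by blast

lemma fd_exhaustion_fd_subspace: "fd_exhaustion scale W \<Longrightarrow> fd_subspace scale (W n)"
  by (simp add: fd_exhaustion_def)

lemma set_sum_commute: "set_sum A B = set_sum B A"
  unfolding set_sum_def by (auto intro: add.commute)

lemma set_sum_mono: "A \<subseteq> A' \<Longrightarrow> B \<subseteq> B' \<Longrightarrow> set_sum A B \<subseteq> set_sum A' B'"
  unfolding set_sum_def by blast

lemma set_sum_upper1: "0 \<in> B \<Longrightarrow> A \<subseteq> set_sum A B"
  unfolding set_sum_def by force

lemma set_sum_upper2: "0 \<in> A \<Longrightarrow> B \<subseteq> set_sum A B"
  unfolding set_sum_def by force

lemma ratio_tendsto_one:
  fixes a b d :: "nat \<Rightarrow> real"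
  assumes "eventually (\<lambda>n. 0 < a n \<and> a n \<le> b n \<and> b n \<le> (1 + d n) * a n) sequentially"
    and "d \<longlonglongrightarrow> 0"
  shows "(\<lambda>n. b n / a n) \<longlonglongrightarrow> 1"
proof (rule tendsto_sandwich[OF _ _ tendsto_const])
  show "eventually (\<lambda>n. 1 \<le> b n / a n) sequentially"
    using assms(1) by eventually_elim simp
  show "eventually (\<lambda>n. b n / a n \<le> 1 + d n) sequentially"
    using assms(1) by eventually_elim (simp add: divide_le_eq)
  show "(\<lambda>n. 1 + d n) \<longlonglongrightarrow> 1"
    using tendsto_add[OF tendsto_const assms(2)] by simp
qed

locale assoc_algebra = vector_space scale for scale :: "'k::field \<Rightarrow> 'r::ring \<Rightarrow> 'r" +
  assumes scale_mult_left: "scale a (x * y) = scale a x * y"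
    and scale_mult_right: "scale a (x * y) = x * scale a y"

lemma algebra_over_imp_assoc_algebra: "algebra_over scale \<Longrightarrow> assoc_algebra scale"
  unfolding algebra_over_def assoc_algebra_def assoc_algebra_axioms_def by blast

context assoc_algebra
begin

lemma mult_span_left_mem:
  assumes "x \<in> span A" "\<And>a. a \<in> A \<Longrightarrow> a * y \<in> T" "subspace T"
  shows "x * y \<in> T"
  using assms(1)
proof (induction rule: span_induct_alt)
  case base
  then show ?case using assms(3) by (simp add: subspace_0)
next
  case (step c a z)
  have "(scale c a + z) * y = scale c (a * y) + z * y"
    by (simp add: distrib_right scale_mult_left)
  then show ?case using step assms by (simp add: subspace_add subspace_scale)
qed

lemma mult_span_right_mem:
  assumes "y \<in> span B" "\<And>b. b \<in> B \<Longrightarrow> x * b \<in> T" "subspace T"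
  shows "x * y \<in> T"
  using assms(1)
proof (induction rule: span_induct_alt)
  case base
  then show ?case using assms(3) by (simp add: subspace_0)
next
  case (step c b z)
  have "x * (scale c b + z) = scale c (x * b) + x * z"
    by (simp add: distrib_left scale_mult_right)
  then show ?case using step assms by (simp add: subspace_add subspace_scale)
qed

lemma subspace_set_prod: "subspace (set_prod scale A B)"
  unfolding set_prod_def by simp

lemma set_prod_mem: "a \<in> A \<Longrightarrow> b \<in> B \<Longrightarrow> a * b \<in> set_prod scale A B"
  unfolding set_prod_def by (rule span_base) blast

lemma set_prod_mono: "A \<subseteq> A' \<Longrightarrow> B \<subseteq> B' \<Longrightarrow> set_prod scale A B \<subseteq> set_prod scale A' B'"
  unfolding set_prod_def by (rule span_mono) blast

lemma set_prod_subset: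
  "subspace T \<Longrightarrow> (\<And>a b. a \<in> A \<Longrightarrow> b \<in> B \<Longrightarrow> a * b \<in> T) \<Longrightarrow> set_prod scale A B \<subseteq> T"
  unfolding set_prod_def by (rule span_minimal) auto

lemma set_prod_span_left: "set_prod scale (span A) B = set_prod scale A B"
proof
  show "set_prod scale (span A) B \<subseteq> set_prod scale A B"
    by (rule set_prod_subset[OF subspace_set_prod], rule mult_span_left_mem[OF _ _ subspace_set_prod])
       (auto intro: set_prod_mem)
  show "set_prod scale A B \<subseteq> set_prod scale (span A) B"
    by (rule set_prod_mono) (auto intro: span_base)
qed

lemma set_prod_span_right: "set_prod scale A (span B) = set_prod scale A B"
proof
  show "set_prod scale A (span B) \<subseteq> set_prod scale A B"
    by (rule set_prod_subset[OF subspace_set_prod], rule mult_span_right_mem[OF _ _ subspace_set_prod])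
       (auto intro: set_prod_mem)
  show "set_prod scale A B \<subseteq> set_prod scale A (span B)"
    by (rule set_prod_mono) (auto intro: span_base)
qed

lemma set_prod_assoc:
  "set_prod scale (set_prod scale A B) C = set_prod scale A (set_prod scale B C)"
proof -
  have "{x * c |x c. x \<in> {a * b |a b. a \<in> A \<and> b \<in> B} \<and> c \<in> C}
      = {a * y |a y. a \<in> A \<and> y \<in> {b * c |b c. b \<in> B \<and> c \<in> C}}"
    by (auto; metis mult.assoc)
  then show ?thesis
    by (simp only: set_prod_def[of scale A B] set_prod_def[of scale B C]
        set_prod_span_left set_prod_span_right) (simp add: set_prod_def)
qed

lemma fd_subspace_iff: "fd_subspace scale W \<longleftrightarrow> (\<exists>B. finite B \<and> W = span B)"
  by (simp add: fd_subspace_def)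

lemma fd_subspace_imp_subspace: "fd_subspace scale W \<Longrightarrow> subspace W"
  by (auto simp: fd_subspace_iff)

lemma fd_subspace_span: "finite B \<Longrightarrow> fd_subspace scale (span B)"
  by (auto simp: fd_subspace_iff)

lemma fd_subspace_set_sum:
  assumes "fd_subspace scale V" "fd_subspace scale Z"
  shows "fd_subspace scale (set_sum V Z)"
proof -
  obtain A B where AB: "finite A" "V = span A" "finite B" "Z = span B"
    using assms by (auto simp: fd_subspace_iff)
  then have "set_sum V Z = span (A \<union> B)"
    by (simp add: set_sum_def span_Un)
  then show ?thesis
    using AB by (simp add: fd_subspace_span)
qed

lemma fd_subspace_set_prod:
  assumes "fd_subspace scale V" "fd_subspace scale Z"
  shows "fd_subspace scale (set_prod scale V Z)"
proof -
  obtain A B where AB: "finite A" "V = span A" "finite B" "Z = span B"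
    using assms by (auto simp: fd_subspace_iff)
  have "{a * b |a b. a \<in> A \<and> b \<in> B} = (\<lambda>(a, b). a * b) ` (A \<times> B)"
    by auto
  then have "finite {a * b |a b. a \<in> A \<and> b \<in> B}"
    using AB by simp
  moreover have "set_prod scale V Z = set_prod scale A B"
    using AB by (simp add: set_prod_span_left set_prod_span_right)
  ultimately show ?thesis
    by (simp add: set_prod_def fd_subspace_span)
qed

lemma subspace_set_sum: "subspace A \<Longrightarrow> subspace B \<Longrightarrow> subspace (set_sum A B)"
  unfolding set_sum_def by (rule subspace_sums)

lemma set_sum_subset: "subspace T \<Longrightarrow> A \<subseteq> T \<Longrightarrow> B \<subseteq> T \<Longrightarrow> set_sum A B \<subseteq> T"
  unfolding set_sum_def by (auto intro: subspace_add)

lemma finite_independent_in_fd_subspace: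
  assumes "B \<subseteq> T" "independent B" "fd_subspace scale T"
  shows "finite B"
proof -
  obtain F where "finite F" "T = span F"
    using assms(3) by (auto simp: fd_subspace_iff)
  then show ?thesis
    using independent_span_bound assms(1,2) by auto
qed

lemma kdim_nonneg: "0 \<le> kdim scale S"
  by (simp add: kdim_def)

lemma kdim_mono:
  assumes "S \<subseteq> T" "fd_subspace scale T"
  shows "kdim scale S \<le> kdim scale T"
proof -
  obtain A where A: "A \<subseteq> T" "independent A" "T \<subseteq> span A" "card A = dim T"
    by (rule basis_exists)
  then have "finite A"
    using finite_independent_in_fd_subspace assms(2) by blast
  then show ?thesis
    using dim_le_card[of S A] A assms(1) by (auto simp: kdim_def)
qed

lemma kdim_set_sum_submodular:
  assumes "subspace U" "fd_subspace scale X" "fd_subspace scale Y" "U \<subseteq> X" "U \<subseteq> Y"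
  shows "kdim scale (set_sum X Y) + kdim scale U \<le> kdim scale X + kdim scale Y"
proof -
  obtain BU where BU: "BU \<subseteq> U" "independent BU" "U \<subseteq> span BU" "card BU = dim U"
    by (rule basis_exists)
  obtain BX where BX: "BU \<subseteq> BX" "BX \<subseteq> X" "independent BX" "X \<subseteq> span BX"
    using maximal_independent_subset_extend[of BU X] BU assms(4) by blast
  obtain BY where BY: "BU \<subseteq> BY" "BY \<subseteq> Y" "independent BY" "Y \<subseteq> span BY"
    using maximal_independent_subset_extend[of BU Y] BU assms(5) by blast
  have fin: "finite BX" "finite BY"
    using finite_independent_in_fd_subspace BX BY assms(2,3) by blast+
  have "set_sum X Y \<subseteq> span (BX \<union> BY)"
    using BX BY span_mono[of BX "BX \<union> BY"] span_mono[of BY "BX \<union> BY"]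
    by (intro set_sum_subset) auto
  then have "dim (set_sum X Y) \<le> card (BX \<union> BY)"
    using dim_le_card fin by blast
  moreover have "card BU \<le> card (BX \<inter> BY)"
    using BX BY fin by (intro card_mono) auto
  moreover have "card BX = dim X" "card BY = dim Y"
    using basis_card_eq_dim BX BY by blast+
  ultimately show ?thesis
    using card_Un_Int[OF fin] BU by (simp add: kdim_def)
qed

lemma subset_enlarge: "subspace V \<Longrightarrow> V \<subseteq> enlarge scale V Z"
  unfolding enlarge_def by (rule set_sum_upper1) (simp add: subspace_set_prod subspace_0)

lemma set_prod_subset_enlarge: "subspace V \<Longrightarrow> set_prod scale V Z \<subseteq> enlarge scale V Z"
  unfolding enlarge_def by (rule set_sum_upper2) (simp add: subspace_0)

lemma enlarge_mono: "Z \<subseteq> Z' \<Longrightarrow> enlarge scale V Z \<subseteq> enlarge scale V Z'"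
  unfolding enlarge_def by (intro set_sum_mono set_prod_mono) auto

lemma enlarge_span: "enlarge scale V (span B) = enlarge scale V B"
  by (simp add: enlarge_def set_prod_span_right)

lemma subspace_enlarge: "subspace V \<Longrightarrow> subspace (enlarge scale V Z)"
  unfolding enlarge_def by (intro subspace_set_sum subspace_set_prod)

lemma fd_subspace_enlarge:
  "fd_subspace scale V \<Longrightarrow> fd_subspace scale Z \<Longrightarrow> fd_subspace scale (enlarge scale V Z)"
  unfolding enlarge_def by (intro fd_subspace_set_sum fd_subspace_set_prod)

lemma enlarge_insert_subset:
  assumes "subspace V"
  shows "enlarge scale V (insert b B) \<subseteq> set_sum (enlarge scale V B) (enlarge scale V {b})"
    (is "_ \<subseteq> ?T")
proof -
  have T: "subspace ?T"
    using assms by (intro subspace_set_sum subspace_enlarge)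
  have B: "enlarge scale V B \<subseteq> ?T" and b: "enlarge scale V {b} \<subseteq> ?T"
    using assms by (auto intro!: set_sum_upper1 set_sum_upper2 subspace_0 subspace_enlarge)
  have "set_prod scale V (insert b B) \<subseteq> ?T"
  proof (rule set_prod_subset[OF T])
    fix v z assume "v \<in> V" "z \<in> insert b B"
    then have "v * z \<in> set_prod scale V B \<union> set_prod scale V {b}"
      by (auto intro: set_prod_mem)
    then show "v * z \<in> ?T"
      using set_prod_subset_enlarge[OF assms] B b by blast
  qed
  then show ?thesis
    using B subset_enlarge[OF assms] unfolding enlarge_def[of _ V "insert b B"]
    by (intro set_sum_subset[OF T]) auto
qed

lemma fd_subspace_enlarge_finite:
  "fd_subspace scale V \<Longrightarrow> finite B \<Longrightarrow> fd_subspace scale (enlarge scale V B)"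
  using fd_subspace_enlarge[OF _ fd_subspace_span] by (simp add: enlarge_span)

lemma kdim_enlarge_insert:
  assumes "fd_subspace scale V" "finite B"
  shows "kdim scale (enlarge scale V (insert b B)) + kdim scale V
    \<le> kdim scale (enlarge scale V B) + kdim scale (enlarge scale V {b})"
proof -
  have V: "subspace V"
    using assms(1) by (rule fd_subspace_imp_subspace)
  have fd: "fd_subspace scale (enlarge scale V B)" "fd_subspace scale (enlarge scale V {b})"
    using assms by (simp_all add: fd_subspace_enlarge_finite)
  have "kdim scale (enlarge scale V (insert b B))
      \<le> kdim scale (set_sum (enlarge scale V B) (enlarge scale V {b}))"
    using enlarge_insert_subset[OF V] fd by (intro kdim_mono fd_subspace_set_sum)
  also have "\<dots> \<le> kdim scale (enlarge scale V B) + kdim scale (enlarge scale V {b}) - kdim scale V"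
    using kdim_set_sum_submodular[OF V fd] subset_enlarge[OF V] by simp
  finally show ?thesis
    by simp
qed

text \<open>With \<open>x / 0 = 0\<close>, a zero-dimensional \<open>W n\<close> has ratio \<open>0\<close>, so the limit \<open>1\<close> rules it out.\<close>

lemma folner_seq_eventually_kdim_pos:
  assumes "folner_seq scale W"
  shows "eventually (\<lambda>n. 0 < kdim scale (W n)) sequentially"
proof -
  have "eventually (\<lambda>n. 0 < kdim scale (set_sum (set_prod scale (W n) {0}) (W n)) / kdim scale (W n))
      sequentially"
    using assms unfolding folner_seq_def by (intro order_tendstoD(1)) auto
  then show ?thesis
  proof eventually_elim
    case (elim n)
    then show ?case
      using kdim_nonneg[of "W n"] by (auto simp: zero_less_divide_iff)
  qed
qed

lemma folner_seq_eventually_kdim_enlarge_singleton: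
  assumes "folner_seq scale W" "e > 0"
  shows "eventually (\<lambda>n. kdim scale (enlarge scale (W n) {r}) \<le> (1 + e) * kdim scale (W n)) sequentially"
proof -
  have "(\<lambda>n. kdim scale (enlarge scale (W n) {r}) / kdim scale (W n)) \<longlonglongrightarrow> 1"
    using assms(1) by (simp add: folner_seq_def enlarge_def set_sum_commute)
  then have "eventually (\<lambda>n. kdim scale (enlarge scale (W n) {r}) / kdim scale (W n) < 1 + e) sequentially"
    using assms(2) by (intro order_tendstoD(2)) auto
  with folner_seq_eventually_kdim_pos[OF assms(1)] show ?thesis
    by eventually_elim (simp add: divide_less_eq)
qed

lemma folner_seq_eventually_kdim_enlarge_finite:
  assumes "\<And>n. fd_subspace scale (W n)" "folner_seq scale W" "finite B" "e > 0"
  shows "eventually (\<lambda>n. kdim scale (enlarge scale (W n) B) \<le> (1 + e) * kdim scale (W n)) sequentially"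
  using assms(3,4)
proof (induction B arbitrary: e rule: finite_induct)
  case empty
  have "kdim scale (enlarge scale (W n) {}) \<le> (1 + e) * kdim scale (W n)" for n
  proof -
    have sub: "subspace (W n)"
      using assms(1) by (rule fd_subspace_imp_subspace)
    have "enlarge scale (W n) {} \<subseteq> W n"
      unfolding enlarge_def by (intro set_sum_subset set_prod_subset sub) auto
    then have "kdim scale (enlarge scale (W n) {}) \<le> kdim scale (W n)"
      using assms(1) by (rule kdim_mono)
    moreover have "0 \<le> e * kdim scale (W n)"
      using empty kdim_nonneg by simp
    ultimately show ?thesis
      by (simp add: distrib_right)
  qed
  then show ?case
    by simp
next
  case (insert b B)
  have "e / 2 > 0"
    using insert.prems by simp
  from insert.IH[OF this] folner_seq_eventually_kdim_enlarge_singleton[OF assms(2) this, of b]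
  show ?case
  proof eventually_elim
    case (elim n)
    then show ?case
      using kdim_enlarge_insert[OF assms(1) insert.hyps(1), of n b] by (simp add: algebra_simps)
  qed
qed

lemma folner_seq_eventually_kdim_enlarge:
  assumes "\<And>n. fd_subspace scale (W n)" "folner_seq scale W" "fd_subspace scale Z" "e > 0"
  shows "eventually (\<lambda>n. kdim scale (enlarge scale (W n) Z) \<le> (1 + e) * kdim scale (W n)) sequentially"
proof -
  obtain B where "finite B" "Z = span B"
    using assms(3) by (auto simp: fd_subspace_iff)
  then show ?thesis
    using folner_seq_eventually_kdim_enlarge_finite[OF assms(1,2) _ assms(4)] by (simp add: enlarge_span)
qed

lemma fd_exhaustion_eventually_subset:
  assumes "fd_exhaustion scale W" "fd_subspace scale Z"
  shows "eventually (\<lambda>n. Z \<subseteq> W n) sequentially"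
proof -
  obtain F where F: "finite F" "Z = span F"
    using assms(2) by (auto simp: fd_subspace_iff)
  have "\<forall>x\<in>F. eventually (\<lambda>n. x \<in> W n) sequentially"
  proof
    fix x
    obtain k where "x \<in> W k"
      using assms(1) unfolding fd_exhaustion_def by (metis UNIV_I UN_E)
    moreover have "W k \<subseteq> W n" if "k \<le> n" for n
      using lift_Suc_mono_le[of W] assms(1) that by (auto simp: fd_exhaustion_def)
    ultimately show "eventually (\<lambda>n. x \<in> W n) sequentially"
      unfolding eventually_sequentially by blast
  qed
  with F(1) have "eventually (\<lambda>n. \<forall>x\<in>F. x \<in> W n) sequentially"
    by (rule eventually_ball_finite)
  then show ?thesis
  proof eventually_elim
    case (elim n)
    have "subspace (W n)"
      using assms(1) by (intro fd_subspace_imp_subspace fd_exhaustion_fd_subspace)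
    with elim show ?case
      unfolding F(2) by (intro span_minimal) auto
  qed
qed

lemma exists_folner_index_seq:
  assumes "fd_exhaustion scale W" "folner_seq scale W"
  obtains m where
    "\<And>n. kdim scale (enlarge scale (W (m n)) (enlarge scale (W n) (W n)))
        \<le> (1 + inverse (real (Suc n))) * kdim scale (W (m n))"
    "\<And>n. 0 < kdim scale (W (m n))"
    "\<And>n. enlarge scale (W (m n)) (W n) \<subseteq> W (m (Suc n))"
proof -
  note fd = fd_exhaustion_fd_subspace[OF assms(1)]
  define good where "good n k \<longleftrightarrow>
      kdim scale (enlarge scale (W k) (enlarge scale (W n) (W n)))
        \<le> (1 + inverse (real (Suc n))) * kdim scale (W k) \<and> 0 < kdim scale (W k)" for n k
  have ev_good: "eventually (good n) sequentially" for n
  proof -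
    have "0 < inverse (real (Suc n))"
      by simp
    from folner_seq_eventually_kdim_enlarge[OF fd assms(2) fd_subspace_enlarge[OF fd fd] this]
      folner_seq_eventually_kdim_pos[OF assms(2)]
    show ?thesis
      unfolding good_def by eventually_elim simp
  qed
  have ev_subset: "eventually (\<lambda>k. enlarge scale (W p) (W n) \<subseteq> W k) sequentially" for p n
    using assms(1) fd_subspace_enlarge[OF fd fd] by (rule fd_exhaustion_eventually_subset)
  have "\<exists>m. \<forall>n. good n (m n) \<and> enlarge scale (W (m n)) (W n) \<subseteq> W (m (Suc n))"
  proof (rule dependent_nat_choice)
    show "\<exists>k. good 0 k"
      using eventually_happens'[OF sequentially_bot ev_good] .
    show "\<exists>k'. good (Suc n) k' \<and> enlarge scale (W k) (W n) \<subseteq> W k'" for k n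
      using eventually_happens'[OF sequentially_bot eventually_conj[OF ev_good ev_subset]] .
  qed
  then show ?thesis
    using that unfolding good_def by blast
qed

lemma enlarge_mult_subset:
  assumes "subspace U" "subspace W" "r \<in> W"
  shows "set_sum (set_prod scale (enlarge scale U W) {r}) (enlarge scale U W)
    \<subseteq> enlarge scale U (enlarge scale W W)" (is "_ \<subseteq> enlarge scale U ?Y")
proof -
  have WY: "W \<subseteq> ?Y" and WWY: "set_prod scale W W \<subseteq> ?Y"
    using assms(2) by (rule subset_enlarge, rule set_prod_subset_enlarge)
  have "set_prod scale (enlarge scale U W) {r} \<subseteq> set_prod scale U ?Y"
  proof (rule set_prod_subset[OF subspace_set_prod])
    fix v b assume "v \<in> enlarge scale U W" "b \<in> {r}"
    then obtain u p where v: "v = u + p" "u \<in> U" "p \<in> set_prod scale U W" and b: "b = r"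
      unfolding enlarge_def set_sum_def by blast
    have "u * r \<in> set_prod scale U ?Y"
      using v(2) assms(3) WY by (intro set_prod_mem) auto
    moreover have "p * r \<in> set_prod scale (set_prod scale U W) {r}"
      using v(3) by (rule set_prod_mem) simp
    then have "p * r \<in> set_prod scale U (set_prod scale W {r})"
      by (simp add: set_prod_assoc)
    then have "p * r \<in> set_prod scale U ?Y"
      using set_prod_mono[of U U "set_prod scale W {r}" ?Y] set_prod_mono[of W W "{r}" W] WWY assms(3)
      by blast
    ultimately show "v * b \<in> set_prod scale U ?Y"
      unfolding v(1) b distrib_right by (rule subspace_add[OF subspace_set_prod])
  qed
  then show ?thesis
    using assms set_prod_subset_enlarge[of U ?Y] enlarge_mono[OF WY, of U]
    by (intro set_sum_subset subspace_enlarge subspace_set_sum) auto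
qed

context
  fixes W :: "nat \<Rightarrow> 'r set" and m :: "nat \<Rightarrow> nat"
  assumes exhaustion: "fd_exhaustion scale W"
    and kdim_bound: "\<And>n. kdim scale (enlarge scale (W (m n)) (enlarge scale (W n) (W n)))
        \<le> (1 + inverse (real (Suc n))) * kdim scale (W (m n))"
    and kdim_pos: "\<And>n. 0 < kdim scale (W (m n))"
begin

lemma exhaustion_fd_subspace: "fd_subspace scale (W n)"
  using exhaustion by (rule fd_exhaustion_fd_subspace)

lemma exhaustion_subspace: "subspace (W n)"
  using exhaustion_fd_subspace by (rule fd_subspace_imp_subspace)

lemma fd_subspace_refinement: "fd_subspace scale (enlarge scale (W (m n)) (W n))"
  by (intro fd_subspace_enlarge exhaustion_fd_subspace)

lemma kdim_refinement_bounds: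
  "kdim scale (W (m n)) \<le> kdim scale (enlarge scale (W (m n)) (W n))"
  "kdim scale (enlarge scale (W (m n)) (W n)) \<le> (1 + inverse (real (Suc n))) * kdim scale (W (m n))"
proof -
  show "kdim scale (W (m n)) \<le> kdim scale (enlarge scale (W (m n)) (W n))"
    by (intro kdim_mono subset_enlarge exhaustion_subspace fd_subspace_refinement)
  have "W n \<subseteq> enlarge scale (W n) (W n)"
    by (intro subset_enlarge exhaustion_subspace)
  then have "kdim scale (enlarge scale (W (m n)) (W n))
      \<le> kdim scale (enlarge scale (W (m n)) (enlarge scale (W n) (W n)))"
    by (intro kdim_mono enlarge_mono fd_subspace_enlarge exhaustion_fd_subspace)
  then show "kdim scale (enlarge scale (W (m n)) (W n)) \<le> (1 + inverse (real (Suc n))) * kdim scale (W (m n))"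
    using kdim_bound by (rule order_trans)
qed

lemma folner_seq_refinement: "folner_seq scale (\<lambda>n. enlarge scale (W (m n)) (W n))"
  unfolding folner_seq_def
proof
  fix r
  let ?V = "\<lambda>n. enlarge scale (W (m n)) (W n)"
  let ?S = "\<lambda>n. set_sum (set_prod scale (?V n) {r}) (?V n)"
  have "eventually (\<lambda>n. span {r} \<subseteq> W n) sequentially"
    by (intro fd_exhaustion_eventually_subset exhaustion fd_subspace_span) simp
  then have "eventually (\<lambda>n. 0 < kdim scale (?V n) \<and> kdim scale (?V n) \<le> kdim scale (?S n) \<and>
      kdim scale (?S n) \<le> (1 + inverse (real (Suc n))) * kdim scale (?V n)) sequentially"
  proof eventually_elim
    case (elim n)
    have "set_prod scale (?V n) {r} = set_prod scale (?V n) (span {r})"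
      by (simp add: set_prod_span_right)
    then have S: "fd_subspace scale (?S n)"
      using fd_subspace_refinement
      by (simp add: fd_subspace_set_sum fd_subspace_set_prod fd_subspace_span)
    have "kdim scale (?V n) \<le> kdim scale (?S n)"
      using S by (intro kdim_mono set_sum_upper2 subspace_0 subspace_set_prod)
    moreover have "kdim scale (?S n) \<le> kdim scale (enlarge scale (W (m n)) (enlarge scale (W n) (W n)))"
      using elim span_base[of r "{r}"]
      by (intro kdim_mono enlarge_mult_subset exhaustion_subspace fd_subspace_enlarge
          exhaustion_fd_subspace) auto
    moreover have "0 \<le> inverse (real (Suc n))"
      by simp
    ultimately show ?case
      using kdim_bound[of n] kdim_pos[of n] kdim_refinement_bounds(1)[of n]
      by (smt (verit) mult_left_mono)
  qed
  then show "(\<lambda>n. kdim scale (?S n) / kdim scale (?V n)) \<longlonglongrightarrow> 1"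
    using LIMSEQ_inverse_real_of_nat by (rule ratio_tendsto_one)
qed

lemma refinement_kdim_ratio_tendsto_one:
  "(\<lambda>n. kdim scale (W (m n)) / kdim scale (enlarge scale (W (m n)) (W n))) \<longlonglongrightarrow> 1"
proof -
  have "(\<lambda>n. kdim scale (enlarge scale (W (m n)) (W n)) / kdim scale (W (m n))) \<longlonglongrightarrow> 1"
    using kdim_pos kdim_refinement_bounds LIMSEQ_inverse_real_of_nat
    by (intro ratio_tendsto_one always_eventually) auto
  from tendsto_inverse[OF this one_neq_zero] show ?thesis
    by (simp add: inverse_divide)
qed

lemma refinement_absorbs:
  assumes "fd_subspace scale Z"
  shows "\<exists>k>0. \<forall>n>k. set_sum (W (m n)) (set_prod scale (W (m n)) Z) \<subseteq> enlarge scale (W (m n)) (W n)"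
proof -
  obtain k where "\<And>n. k \<le> n \<Longrightarrow> Z \<subseteq> W n"
    using fd_exhaustion_eventually_subset[OF exhaustion assms] unfolding eventually_sequentially by blast
  then have "enlarge scale (W (m n)) Z \<subseteq> enlarge scale (W (m n)) (W n)" if "Suc k < n" for n
    using that by (intro enlarge_mono) simp
  then show ?thesis
    unfolding enlarge_def[of scale "W (m _)" Z] by (intro exI[of _ "Suc k"]) simp
qed

end

end

theorem lemma3:
  fixes scale :: "'k::field \<Rightarrow> 'r::ring \<Rightarrow> 'r"
  assumes "affine_algebra scale"
    and "amenable scale"
    and "\<forall>x y :: 'r. x * y = 0 \<longrightarrow> x = 0 \<or> y = 0"
  shows "\<exists>V Vb :: nat \<Rightarrow> 'r set.
     (\<forall>n. fd_subspace scale (V n) \<and> fd_subspace scale (Vb n)) \<and>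
     (\<forall>n. Vb n \<subseteq> V n \<and> V n \<subseteq> Vb (Suc n)) \<and>
     (\<forall>r. (\<lambda>n. kdim scale (set_sum (set_prod scale (V n) {r}) (V n)) / kdim scale (V n))
             \<longlonglongrightarrow> 1) \<and>
     (\<lambda>n. kdim scale (Vb n) / kdim scale (V n)) \<longlonglongrightarrow> 1 \<and>
     (\<forall>Z. fd_subspace scale Z \<longrightarrow>
        (\<exists>k>0. \<forall>n>k. set_sum (Vb n) (set_prod scale (Vb n) Z) \<subseteq> V n))"
proof -
  interpret assoc_algebra scale
    using assms(1) by (simp add: affine_algebra_def algebra_over_imp_assoc_algebra)
  obtain W where W: "fd_exhaustion scale W" "folner_seq scale W"
    using assms(2) by (auto simp: amenable_iff)
  obtain m where bound: "\<And>n. kdim scale (enlarge scale (W (m n)) (enlarge scale (W n) (W n)))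
        \<le> (1 + inverse (real (Suc n))) * kdim scale (W (m n))"
    and pos: "\<And>n. 0 < kdim scale (W (m n))"
    and nested: "\<And>n. enlarge scale (W (m n)) (W n) \<subseteq> W (m (Suc n))"
    using exists_folner_index_seq[OF W] by blast
  note index_seq = W(1) bound pos
  show ?thesis
    using exhaustion_fd_subspace[OF index_seq] fd_subspace_refinement[OF index_seq] nested
      subset_enlarge[OF exhaustion_subspace[OF index_seq]]
      folner_seq_refinement[OF index_seq, unfolded folner_seq_def]
      refinement_kdim_ratio_tendsto_one[OF index_seq] refinement_absorbs[OF index_seq]
    by (intro exI[where x = "\<lambda>n. enlarge scale (W (m n)) (W n)"] exI[where x = "\<lambda>n. W (m n)"]
        conjI allI impI) auto
qed

end
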